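(* Let $S_n,T_n,z_0$ be such that $R_n(1)=z_0$, $R_n(z_0)=1$, $R_n'(1)R_n'(z_0)=1$ and $S_n/s^\nu\to\mu$, $T_n/s^\nu\to(d_1d_n-1)\mu$, $z_0/s^\nu\to d_1d_n\mu$ as $s\to0^+$. Let $\psi(z)=z_0/z$ and $\widehat R_n=\psi\circ R_n\circ\psi^{-1}$. Then, as $s\to0^+$, $R_n\circ R_n$ converges to $h_{d_1,d_n}(z)=\frac{(d_1d_n)^{d_n}z^{d_1d_n}}{(1+(d_1d_n-1)z^{d_1})^{d_n}}$ and $\widehat R_n\circ\widehat R_n$ converges to $h_{d_1d_n}(z)=\frac{d_1d_nz^{d_1d_n}}{1+(d_1d_n-1)z^{d_1d_n}}$, both locally uniformly on $\widehat{\mathbb{C}}\setminus\{0\}$.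
   Context: $n\ge3$ odd, $d_1,\dots,d_n$ positive integers with $\sum1/d_i<1$, $d_{\max}=\max_id_i$, $D_i=d_i+d_{i+1}$, $c_1=(d_{\max}^2s)^{1/d_1}$, $c_i=s^{1/d_i}c_{i-1}$, $R_n(z)=\frac{S_n}{z^{d_n}}\prod_{i=1}^{n-1}(z^{D_i}-c_i^{D_i})^{(-1)^i}+T_n$, $\nu=\frac{d_n}{d_n-1}\sum_{i=1}^{n-1}\frac1{d_i}$, $\mu=(d_1d_n)^{-d_n/(d_n-1)}d_{\max}^{2(d_n-d_1)/(d_1(d_n-1))}$. Such $S_n,T_n,z_0$ exist for small $s$. *)

theory Defs
  imports Complex_Main
begin

text \<open>The Riemann sphere is modelled as complex option, None being the point at infinity.\<close>

fun cdist :: "complex option \<Rightarrow> complex option \<Rightarrow> real" where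
  "cdist (Some a) (Some b) = 2 * norm (a - b) / (sqrt (1 + (norm a)^2) * sqrt (1 + (norm b)^2))"
| "cdist (Some a) None = 2 / sqrt (1 + (norm a)^2)"
| "cdist None (Some b) = 2 / sqrt (1 + (norm b)^2)"
| "cdist None None = 0"

definition sph_ext :: "(complex \<Rightarrow> complex) \<Rightarrow> complex option \<Rightarrow> complex option" where
  "sph_ext f w = (case w of
      Some z \<Rightarrow> (if \<exists>L. (f \<longlongrightarrow> L) (at z) then Some (Lim (at z) f) else None)
    | None \<Rightarrow> (if \<exists>L. (f \<longlongrightarrow> L) at_infinity then Some (Lim at_infinity f) else None))"

definition dmax :: "(nat \<Rightarrow> nat) \<Rightarrow> nat \<Rightarrow> nat" where
  "dmax d n = Max (d ` {1..n})"

definition DD :: "(nat \<Rightarrow> nat) \<Rightarrow> nat \<Rightarrow> nat" where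
  "DD d i = d i + d (Suc i)"

fun cc :: "(nat \<Rightarrow> nat) \<Rightarrow> nat \<Rightarrow> real \<Rightarrow> nat \<Rightarrow> real" where
  "cc d n s 0 = 0"
| "cc d n s (Suc 0) = (real (dmax d n) ^ 2 * s) powr (1 / real (d 1))"
| "cc d n s (Suc (Suc k)) = s powr (1 / real (d (Suc (Suc k)))) * cc d n s (Suc k)"

definition Rfun :: "(nat \<Rightarrow> nat) \<Rightarrow> nat \<Rightarrow> real \<Rightarrow> real \<Rightarrow> real \<Rightarrow> complex \<Rightarrow> complex" where
  "Rfun d n S T s z =
     complex_of_real S / z ^ d n
       * (\<Prod>i\<in>{1..n-1}. (z ^ DD d i - complex_of_real (cc d n s i ^ DD d i)) powi ((-1) ^ i))
     + complex_of_real T"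

definition nu :: "(nat \<Rightarrow> nat) \<Rightarrow> nat \<Rightarrow> real" where
  "nu d n = real (d n) / (real (d n) - 1) * (\<Sum>i\<in>{1..n-1}. 1 / real (d i))"

definition mu :: "(nat \<Rightarrow> nat) \<Rightarrow> nat \<Rightarrow> real" where
  "mu d n = (real (d 1) * real (d n)) powr (- real (d n) / (real (d n) - 1))
     * real (dmax d n) powr (2 * (real (d n) - real (d 1)) / (real (d 1) * (real (d n) - 1)))"

definition h2 :: "nat \<Rightarrow> nat \<Rightarrow> complex \<Rightarrow> complex" where
  "h2 a b z = (of_nat (a * b)) ^ b * z ^ (a * b) / (1 + (of_nat (a * b) - 1) * z ^ a) ^ b"

definition h1 :: "nat \<Rightarrow> complex \<Rightarrow> complex" where
  "h1 k z = of_nat k * z ^ k / (1 + (of_nat k - 1) * z ^ k)"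

text \<open>psi(z) = z0/z on the Riemann sphere (an involution, so psi^-1 = psi).\<close>
definition psi :: "real \<Rightarrow> complex option \<Rightarrow> complex option" where
  "psi z0 = sph_ext (\<lambda>z. complex_of_real z0 / z)"

end

theory Submission
  imports Defs "HOL-Analysis.Elementary_Normed_Spaces"
begin

text \<open>Two scales govern \<open>R\<^sub>n\<close> as \<open>s \<rightarrow> 0\<^sup>+\<close>. Away from the origin the exponents \<open>\<plusminus>D\<^sub>i\<close>
  telescope and the radii \<open>c\<^sub>i\<close> shrink to \<open>0\<close>, so that \<open>R\<^sub>n(w)/s\<^sup>\<nu> \<rightarrow> \<mu>/w\<^bsup>d\<^sub>1\<^esup> + (k - 1)\<mu>\<close>,
  where \<open>k = d\<^sub>1d\<^sub>n\<close>. On the scale \<open>w = s\<^sup>\<nu>u\<close>, which lies far inside every \<open>c\<^sub>i\<close> because \<open>\<nu>\<close>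
  exceeds all exponents of the \<open>c\<^sub>i\<close>, one has \<open>1/R\<^sub>n(s\<^sup>\<nu>u) \<rightarrow> (u/(k\<mu>))\<^bsup>d\<^sub>n\<^esup>\<close>, the constant
  being forced by \<open>R\<^sub>n(z\<^sub>0) = 1\<close>. In \<open>R\<^sub>n \<circ> R\<^sub>n\<close> the first step follows the outer expansion and
  the second the inner one, which gives \<open>h\<^bsub>d\<^sub>1,d\<^sub>n\<^esub>\<close>; the involution \<open>\<psi>(z) = z\<^sub>0/z\<close>
  exchanges the two scales, and the conjugated iterate gives \<open>h\<^bsub>k\<^esub>\<close>.

  All estimates are made in the chart \<open>1/w\<close> around infinity, which controls the chordal
  distance, and uniformity on \<open>{|z| \<ge> r}\<close> is expressed as convergence along the filter
  \<open>at_right 0 \<times>\<^sub>F principal {z. r \<le> norm z}\<close>.\<close>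

lemma tendsto_imp_Bfun:
  assumes "(f \<longlongrightarrow> a) F"
  shows "Bfun f F"
  unfolding Bfun_metric_def
  using tendstoD[OF assms zero_less_one]
  by (intro exI[of _ a] exI[of _ 1]) (auto elim: eventually_mono)

lemma Bfun_add:
  fixes f g :: "'a \<Rightarrow> 'b::real_normed_vector"
  assumes "Bfun f F" "Bfun g F"
  shows "Bfun (\<lambda>x. f x + g x) F"
proof -
  obtain A B where "eventually (\<lambda>x. norm (f x) \<le> A) F" "eventually (\<lambda>x. norm (g x) \<le> B) F"
    using assms by (blast elim: BfunE)
  then have "eventually (\<lambda>x. norm (f x + g x) \<le> A + B) F"
    by eventually_elim (metis add_mono norm_triangle_ineq order_trans)
  then show ?thesis by (rule BfunI)
qed

lemma Bfun_mult:
  fixes f g :: "'a \<Rightarrow> 'b::real_normed_algebra"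
  assumes "Bfun f F" "Bfun g F"
  shows "Bfun (\<lambda>x. f x * g x) F"
proof -
  obtain A B where "0 < A" and fA: "eventually (\<lambda>x. norm (f x) \<le> A) F"
    and gB: "eventually (\<lambda>x. norm (g x) \<le> B) F"
    using assms by (blast elim: BfunE)
  from fA gB have "eventually (\<lambda>x. norm (f x * g x) \<le> A * B) F"
  proof eventually_elim
    case (elim x)
    have "norm (f x * g x) \<le> norm (f x) * norm (g x)" by (rule norm_mult_ineq)
    also have "\<dots> \<le> A * B" using elim \<open>0 < A\<close> by (intro mult_mono) auto
    finally show ?case .
  qed
  then show ?thesis by (rule BfunI)
qed

lemma Bfun_power:
  fixes f :: "'a \<Rightarrow> 'b::{real_normed_algebra,monoid_mult}"
  assumes "Bfun f F"
  shows "Bfun (\<lambda>x. f x ^ m) F"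
  by (induction m) (simp_all add: Bfun_mult assms)

lemma Bfun_of_tendsto_diff_zero:
  fixes f g :: "'a \<Rightarrow> 'b::real_normed_vector"
  assumes "((\<lambda>x. f x - g x) \<longlongrightarrow> 0) F" "Bfun g F"
  shows "Bfun f F"
  using Bfun_add[OF tendsto_imp_Bfun[OF assms(1)] assms(2)] by simp

lemma tendsto_mult_Bfun_zero:
  fixes f g :: "'a \<Rightarrow> 'b::real_normed_algebra"
  assumes "(f \<longlongrightarrow> 0) F" "Bfun g F"
  shows "((\<lambda>x. f x * g x) \<longlongrightarrow> 0) F"
  using bounded_bilinear.Zfun_prod_Bfun[OF bounded_bilinear_mult] assms
  by (simp add: tendsto_Zfun_iff)

lemma tendsto_diff_zero_trans:
  fixes f g h :: "'a \<Rightarrow> 'b::real_normed_vector"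
  assumes "((\<lambda>x. f x - g x) \<longlongrightarrow> 0) F" "((\<lambda>x. g x - h x) \<longlongrightarrow> 0) F"
  shows "((\<lambda>x. f x - h x) \<longlongrightarrow> 0) F"
  using tendsto_add[OF assms] by simp

lemma tendsto_power_diff_zero:
  fixes f g :: "'a \<Rightarrow> 'b::real_normed_field"
  assumes "((\<lambda>x. f x - g x) \<longlongrightarrow> 0) F" "Bfun f F" "Bfun g F"
  shows "((\<lambda>x. f x ^ m - g x ^ m) \<longlongrightarrow> 0) F"
proof (induction m)
  case (Suc m)
  have "((\<lambda>x. (f x ^ m - g x ^ m) * f x + (f x - g x) * g x ^ m) \<longlongrightarrow> 0) F"
    using tendsto_add[OF tendsto_mult_Bfun_zero[OF Suc assms(2)]
        tendsto_mult_Bfun_zero[OF assms(1) Bfun_power[OF assms(3)]]] by simp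
  then show ?case by (simp add: algebra_simps)
qed simp

lemma tendsto_diff_divide_zero:
  fixes f g h :: "'a \<Rightarrow> 'b::real_normed_field"
  assumes "((\<lambda>x. f x - g x) \<longlongrightarrow> 0) F" "Bfun g F" "(h \<longlongrightarrow> c) F" "c \<noteq> 0"
  shows "((\<lambda>x. f x / h x - g x / c) \<longlongrightarrow> 0) F"
proof -
  have "((\<lambda>x. inverse (h x) - inverse c) \<longlongrightarrow> 0) F"
    using assms(3,4) by (intro LIM_zero tendsto_intros)
  then have "((\<lambda>x. (f x - g x) * inverse (h x) + (inverse (h x) - inverse c) * g x) \<longlongrightarrow> 0) F"
    using tendsto_add[OF tendsto_mult_Bfun_zero[OF assms(1) Bfun_inverse[OF assms(3,4)]]
        tendsto_mult_Bfun_zero[OF _ assms(2)]] by simp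
  then show ?thesis by (simp add: divide_inverse algebra_simps)
qed

lemma Bfun_inverse_of_norm_ge:
  fixes f :: "'a \<Rightarrow> 'b::real_normed_div_algebra"
  assumes "r > 0" "eventually (\<lambda>x. r \<le> norm (f x)) F"
  shows "Bfun (\<lambda>x. inverse (f x)) F"
proof (rule BfunI)
  show "eventually (\<lambda>x. norm (inverse (f x)) \<le> inverse r) F"
    using assms(2) by eventually_elim (use assms(1) in \<open>simp add: norm_inverse le_imp_inverse_le\<close>)
qed

lemma eventually_norm_ge_of_Bfun_inverse:
  fixes f :: "'a \<Rightarrow> 'b::real_normed_div_algebra"
  assumes "Bfun (\<lambda>x. inverse (f x)) F" "eventually (\<lambda>x. f x \<noteq> 0) F"
  obtains r where "r > 0" "eventually (\<lambda>x. r \<le> norm (f x)) F"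
proof -
  obtain B where B: "0 < B" "eventually (\<lambda>x. norm (inverse (f x)) \<le> B) F"
    using assms(1) by (rule BfunE)
  have "eventually (\<lambda>x. inverse B \<le> norm (f x)) F"
    using B(2) assms(2) by eventually_elim (use B(1) in \<open>auto simp: norm_inverse inverse_le_imp_le\<close>)
  with B(1) show thesis by (intro that[of "inverse B"]) simp_all
qed

lemma eventually_prod_principal_iff:
  "eventually P (F \<times>\<^sub>F principal A) \<longleftrightarrow> (\<forall>\<^sub>F x in F. \<forall>y\<in>A. P (x, y))"
  unfolding eventually_prod_filter eventually_principal
  by (auto elim!: eventually_mono intro!: exI[of _ "\<lambda>x. \<forall>y\<in>A. P (x, y)"])

lemma prod_power_int_eq_power_int_sum:
  fixes x :: "'a::field"
  assumes "x \<noteq> 0"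
  shows "(\<Prod>i\<in>I. x powi f i) = x powi (\<Sum>i\<in>I. f i)"
  by (induction I rule: infinite_finite_induct) (auto simp: power_int_add assms)

lemma tendsto_prod_one_minus_power_int:
  fixes a :: "'i \<Rightarrow> 'p \<Rightarrow> 'b::real_normed_field"
  assumes "\<And>i. i \<in> I \<Longrightarrow> (a i \<longlongrightarrow> 0) F"
  shows "((\<lambda>p. \<Prod>i\<in>I. (1 - a i p) powi e i) \<longlongrightarrow> 1) F"
proof -
  have "((\<lambda>p. \<Prod>i\<in>I. (1 - a i p) powi e i) \<longlongrightarrow> (\<Prod>i\<in>I. (1 - 0) powi e i)) F"
    by (intro tendsto_prod tendsto_power_int tendsto_diff tendsto_const assms) auto
  then show ?thesis by simp
qed

lemma tendsto_powr_at_right_0: "p > 0 \<Longrightarrow> ((\<lambda>s::real. s powr p) \<longlongrightarrow> 0) (at_right 0)"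
  by (rule tendsto_zero_powrI) (auto intro!: tendsto_ident_at eventually_at_rightI[of 0 1])

section \<open>The Riemann sphere\<close>

text \<open>The chart \<open>w \<mapsto> 1/w\<close> around infinity. It also sends \<open>Some 0\<close> to \<open>0\<close>, which is why
  closeness in this chart only controls the chordal distance away from \<open>Some 0\<close>.\<close>
fun recip_coord :: "complex option \<Rightarrow> complex" where
  "recip_coord None = 0"
| "recip_coord (Some a) = inverse a"

lemma inverse_sqrt_one_add_norm_sq_le:
  fixes a :: complex
  assumes "a \<noteq> 0"
  shows "inverse (sqrt (1 + (norm a)\<^sup>2)) \<le> inverse (norm a)"
  using assms real_le_rsqrt[of "norm a" "1 + (norm a)\<^sup>2"] by (intro le_imp_inverse_le) auto

lemma cdist_le_recip_coord:
  assumes "x \<noteq> Some 0" "y \<noteq> Some 0"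
  shows "cdist x y \<le> 2 * norm (recip_coord x - recip_coord y)"
proof (cases x; cases y)
  fix a b assume x: "x = Some a" and y: "y = Some b"
  have ab: "a \<noteq> 0" "b \<noteq> 0" using assms x y by auto
  have "norm (inverse a - inverse b) = norm (a - b) * (inverse (norm a) * inverse (norm b))"
    using ab by (simp add: inverse_diff_inverse norm_mult norm_inverse norm_minus_commute)
  moreover have "inverse (sqrt (1 + (norm a)\<^sup>2)) * inverse (sqrt (1 + (norm b)\<^sup>2))
      \<le> inverse (norm a) * inverse (norm b)"
    using ab inverse_sqrt_one_add_norm_sq_le by (intro mult_mono) auto
  ultimately show ?thesis
    using x y by (simp add: divide_inverse mult.assoc mult_left_mono)
qed (use assms inverse_sqrt_one_add_norm_sq_le in \<open>auto simp: divide_inverse norm_inverse\<close>)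

lemma eventually_cdist_less:
  assumes "((\<lambda>p. recip_coord (X p) - recip_coord (Y p)) \<longlongrightarrow> 0) F"
    and "\<forall>\<^sub>F p in F. X p \<noteq> Some 0 \<and> Y p \<noteq> Some 0" and "e > 0"
  shows "\<forall>\<^sub>F p in F. cdist (X p) (Y p) < e"
proof -
  have "\<forall>\<^sub>F p in F. norm (recip_coord (X p) - recip_coord (Y p)) < e / 2"
    using tendstoD[OF assms(1), of "e / 2"] assms(3) by (simp add: dist_norm)
  with assms(2) show ?thesis
    by eventually_elim (use cdist_le_recip_coord in fastforce)
qed

lemma eventually_cdist_less_uniformly:
  assumes "((\<lambda>p. recip_coord (X (fst p) (snd p)) - recip_coord (Y (fst p) (snd p))) \<longlongrightarrow> 0)
      (F \<times>\<^sub>F principal A)"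
    and "\<forall>\<^sub>F p in F \<times>\<^sub>F principal A. X (fst p) (snd p) \<noteq> Some 0 \<and> Y (fst p) (snd p) \<noteq> Some 0"
    and "e > 0"
  shows "\<forall>\<^sub>F s in F. \<forall>z\<in>A. cdist (X s z) (Y s z) < e"
  using eventually_cdist_less[OF assms] by (simp add: eventually_prod_principal_iff)

lemma sph_ext_Some_tendsto: "(f \<longlongrightarrow> l) (at z) \<Longrightarrow> sph_ext f (Some z) = Some l"
  unfolding sph_ext_def by (auto intro: tendsto_Lim)

lemma sph_ext_Some_isCont: "isCont f z \<Longrightarrow> sph_ext f (Some z) = Some (f z)"
  by (simp add: isCont_def sph_ext_Some_tendsto)

lemma sph_ext_Some_no_limit: "\<nexists>l. (f \<longlongrightarrow> l) (at z) \<Longrightarrow> sph_ext f (Some z) = None"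
  unfolding sph_ext_def by auto

lemma sph_ext_None_tendsto: "(f \<longlongrightarrow> l) at_infinity \<Longrightarrow> sph_ext f None = Some l"
  unfolding sph_ext_def using trivial_limit_at_infinity by (auto intro: tendsto_Lim)

lemma eventually_at_notin_finite:
  fixes z :: complex
  assumes "finite A"
  shows "\<forall>\<^sub>F w in at z. w \<notin> A"
proof -
  have "\<forall>\<^sub>F w in at z. \<forall>y\<in>A. w \<noteq> y"
    using assms by (rule eventually_ball_finite) (auto intro: eventually_neq_at_within)
  then show ?thesis by eventually_elim auto
qed

lemma recip_coord_sph_ext_Some:
  assumes fg: "\<forall>\<^sub>F w in at z. f w = inverse (g w)" and g: "isCont g z"
    and nz: "\<forall>\<^sub>F w in at z. g w \<noteq> 0"
  shows "recip_coord (sph_ext f (Some z)) = g z" "sph_ext f (Some z) \<noteq> Some 0"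
proof -
  have "sph_ext f (Some z) = (if g z = 0 then None else Some (inverse (g z)))"
  proof (cases "g z = 0")
    case False
    have "((\<lambda>w. inverse (g w)) \<longlongrightarrow> inverse (g z)) (at z)"
      using g False by (intro tendsto_intros) (auto simp: isCont_def)
    moreover have "\<forall>\<^sub>F w in at z. inverse (g w) = f w"
      using fg by (simp add: eq_commute)
    ultimately have "(f \<longlongrightarrow> inverse (g z)) (at z)"
      by (rule Lim_transform_eventually)
    then show ?thesis using False by (simp add: sph_ext_Some_tendsto)
  next
    case True
    have "\<nexists>l. (f \<longlongrightarrow> l) (at z)"
    proof
      assume "\<exists>l. (f \<longlongrightarrow> l) (at z)"
      then obtain l where "(f \<longlongrightarrow> l) (at z)" by blast
      then have "((\<lambda>w. f w * g w) \<longlongrightarrow> l * g z) (at z)"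
        using g by (intro tendsto_intros) (auto simp: isCont_def)
      moreover have "\<forall>\<^sub>F w in at z. f w * g w = 1"
        using fg nz by eventually_elim simp
      ultimately have "((\<lambda>_. 1 :: complex) \<longlongrightarrow> 0) (at z)"
        using True by (auto intro: Lim_transform_eventually)
      then show False by (simp add: tendsto_const_iff)
    qed
    then show ?thesis using True by (simp add: sph_ext_Some_no_limit)
  qed
  then show "recip_coord (sph_ext f (Some z)) = g z" "sph_ext f (Some z) \<noteq> Some 0" by auto
qed

lemma psi_Some:
  assumes "z0 \<noteq> 0"
  shows "psi z0 (Some a) = (if a = 0 then None else Some (of_real z0 / a))"
proof -
  have "\<forall>\<^sub>F w in at a. of_real z0 / w = inverse (w / of_real z0)"
    by simp
  moreover have "isCont (\<lambda>w. w / of_real z0) a"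
    using assms by (intro continuous_intros) auto
  moreover have "\<forall>\<^sub>F w in at a. w / of_real z0 \<noteq> 0"
    using eventually_neq_at_within[of 0 a UNIV] assms by (auto elim: eventually_mono)
  ultimately have "recip_coord (psi z0 (Some a)) = a / of_real z0" "psi z0 (Some a) \<noteq> Some 0"
    unfolding psi_def by (rule recip_coord_sph_ext_Some)+
  then show ?thesis
    using assms by (cases "psi z0 (Some a)") (auto, metis inverse_divide inverse_inverse_eq)
qed

lemma psi_None: "psi z0 None = Some 0"
  unfolding psi_def
proof (rule sph_ext_None_tendsto)
  have "((\<lambda>w. of_real z0 * inverse w) \<longlongrightarrow> of_real z0 * (0::complex)) at_infinity"
    by (intro tendsto_intros tendsto_inverse_0)
  then show "((\<lambda>w::complex. of_real z0 / w) \<longlongrightarrow> 0) at_infinity"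
    by (simp add: divide_inverse)
qed

lemma psi_psi: "z0 \<noteq> 0 \<Longrightarrow> psi z0 (psi z0 x) = x"
  by (cases x) (auto simp: psi_Some psi_None)

section \<open>The limit maps\<close>

text \<open>The limit of \<open>R\<^sub>n(w)/s\<^sup>\<nu>\<close> away from the origin (with \<open>a = d\<^sub>1\<close>); it also describes
  \<open>1/h\<^bsub>a,b\<^esub>\<close>.\<close>
definition outer_profile :: "real \<Rightarrow> nat \<Rightarrow> nat \<Rightarrow> complex \<Rightarrow> complex" where
  "outer_profile \<mu> a k w = of_real \<mu> * inverse w ^ a + of_real ((real k - 1) * \<mu>)"

lemma h2_eq_inverse_outer_profile:
  assumes "a > 0" "b > 0" "\<mu> > 0" "w \<noteq> 0"
  shows "h2 a b w = inverse ((outer_profile \<mu> a (a * b) w / of_real (real (a * b) * \<mu>)) ^ b)"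
proof -
  have "outer_profile \<mu> a (a * b) w / of_real (real (a * b) * \<mu>)
      = (1 + (of_nat (a * b) - 1) * w ^ a) / (of_nat (a * b) * w ^ a)"
    using assms by (simp add: outer_profile_def field_simps power_inverse)
  then show ?thesis
    unfolding h2_def by (simp add: power_divide power_mult_distrib power_mult flip: power_inverse)
qed

lemma recip_coord_h2_Some:
  assumes "a > 0" "b > 0" "a * b \<ge> 2" "\<mu> > 0" "z \<noteq> 0"
  shows "recip_coord (sph_ext (h2 a b) (Some z))
           = (outer_profile \<mu> a (a * b) z / of_real (real (a * b) * \<mu>)) ^ b"
    and "sph_ext (h2 a b) (Some z) \<noteq> Some 0"
proof -
  define g where "g w = (outer_profile \<mu> a (a * b) w / of_real (real (a * b) * \<mu>)) ^ b" for w
  have "{w. g w = 0} \<subseteq> {0} \<union> {w. w ^ a = inverse (- of_real (real (a * b) - 1))}"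
  proof
    fix w assume "w \<in> {w. g w = 0}"
    then have "outer_profile \<mu> a (a * b) w = 0"
      using assms by (simp add: g_def)
    then have "of_real \<mu> * inverse w ^ a = of_real \<mu> * - of_real (real (a * b) - 1)"
      unfolding outer_profile_def by (simp add: algebra_simps eq_neg_iff_add_eq_0)
    then have "inverse w ^ a = - of_real (real (a * b) - 1)"
      using assms(4) by simp
    then have "w ^ a = inverse (- of_real (real (a * b) - 1))"
      by (metis inverse_inverse_eq power_inverse)
    then show "w \<in> {0} \<union> {w. w ^ a = inverse (- of_real (real (a * b) - 1))}"
      by simp
  qed
  then have "finite {w. g w = 0}"
    using finite_nth_roots[OF assms(1)] by (auto intro: finite_subset)
  then have nz: "\<forall>\<^sub>F w in at z. g w \<noteq> 0"
    by (rule eventually_mono[OF eventually_at_notin_finite]) simp_all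
  have "\<forall>\<^sub>F w in at z. h2 a b w = inverse (g w)"
    using eventually_neq_at_within[of 0 z UNIV]
    by eventually_elim (unfold g_def, rule h2_eq_inverse_outer_profile[OF assms(1,2,4)])
  moreover have "isCont g z"
    unfolding g_def outer_profile_def using assms by (intro continuous_intros) auto
  ultimately show "recip_coord (sph_ext (h2 a b) (Some z)) = g z"
    and "sph_ext (h2 a b) (Some z) \<noteq> Some 0"
    using nz by (rule recip_coord_sph_ext_Some)+
qed

lemma sph_ext_h2_None:
  assumes "a > 0" "a * b \<ge> 2"
  shows "sph_ext (h2 a b) None = Some ((of_nat (a * b) / (of_nat (a * b) - 1)) ^ b)"
proof (rule sph_ext_None_tendsto)
  have "of_nat (a * b) - 1 \<noteq> (0::complex)"
    using assms(2) of_nat_eq_1_iff[of "a * b"] by auto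
  moreover have "((\<lambda>w. inverse w ^ a + (of_nat (a * b) - 1)) \<longlongrightarrow> of_nat (a * b) - (1::complex))
      at_infinity"
    using tendsto_add[OF tendsto_power[OF tendsto_inverse_0, of a] tendsto_const] assms(1)
    by (simp add: zero_power)
  ultimately have "((\<lambda>w. (of_nat (a * b) / (inverse w ^ a + (of_nat (a * b) - 1))) ^ b)
      \<longlongrightarrow> (of_nat (a * b) / (of_nat (a * b) - 1 :: complex)) ^ b) at_infinity"
    by (intro tendsto_power tendsto_divide tendsto_const)
  moreover have "\<forall>\<^sub>F w in at_infinity. (w::complex) \<noteq> 0"
    unfolding eventually_at_infinity by (intro exI[of _ 1]) auto
  then have "\<forall>\<^sub>F w in at_infinity. (of_nat (a * b) / (inverse w ^ a + (of_nat (a * b) - 1))) ^ b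
      = h2 a b w"
  proof eventually_elim
    case (elim w)
    have "inverse w ^ a + (of_nat (a * b) - 1) = (1 + (of_nat (a * b) - 1) * w ^ a) / w ^ a"
      using elim by (simp add: field_simps power_inverse)
    then show ?case
      by (simp add: h2_def power_divide power_mult_distrib power_mult)
  qed
  ultimately show "(h2 a b \<longlongrightarrow> (of_nat (a * b) / (of_nat (a * b) - 1)) ^ b) at_infinity"
    by (rule Lim_transform_eventually)
qed

lemma h1_eq_h2: "h1 k = h2 k 1"
  unfolding h1_def h2_def by auto

lemma Bfun_outer_profile:
  assumes "r > 0" "\<forall>\<^sub>F p in F. r \<le> norm (z p)"
  shows "Bfun (\<lambda>p. outer_profile \<mu> a k (z p)) F"
  unfolding outer_profile_def
  by (intro Bfun_add Bfun_mult Bfun_power Bfun_const Bfun_inverse_of_norm_ge[OF assms])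

section \<open>The degrees and the radii \<open>c\<^sub>i\<close>\<close>

locale rn_degrees =
  fixes d :: "nat \<Rightarrow> nat" and n :: nat
  assumes n_ge_3: "n \<ge> 3" and n_odd: "odd n" and d_pos: "\<forall>i\<in>{1..n}. d i > 0"
    and recip_sum_less_1: "(\<Sum>i\<in>{1..n}. 1 / real (d i)) < 1"
begin

lemma d_ge_2:
  assumes "i \<in> {1..n}"
  shows "d i \<ge> 2"
proof (rule ccontr)
  assume "\<not> d i \<ge> 2"
  then have "1 / real (d i) = 1" using d_pos assms by force
  moreover have "1 / real (d i) \<le> (\<Sum>i\<in>{1..n}. 1 / real (d i))"
    by (rule member_le_sum) (use assms in auto)
  ultimately show False using recip_sum_less_1 by simp
qed

lemma d_1_ge_2: "d 1 \<ge> 2" and d_n_ge_2: "d n \<ge> 2"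
  using d_ge_2 n_ge_3 by auto

lemma DD_pos: "i \<in> {1..n-1} \<Longrightarrow> DD d i > 0"
  using d_ge_2[of i] unfolding DD_def by fastforce

lemma dmax_ge_2: "dmax d n \<ge> 2"
proof -
  have "d 1 \<le> dmax d n" unfolding dmax_def by (rule Max_ge) (use n_ge_3 in auto)
  then show ?thesis using d_1_ge_2 by simp
qed

definition recip_partial_sum :: "nat \<Rightarrow> real" where
  "recip_partial_sum i = (\<Sum>j\<in>{1..i}. 1 / real (d j))"

definition cc_const :: real where
  "cc_const = (real (dmax d n) ^ 2) powr (1 / real (d 1))"

lemma cc_const_pos: "cc_const > 0"
  unfolding cc_const_def using dmax_ge_2 by simp

lemma recip_partial_sum_pos: "1 \<le> i \<Longrightarrow> recip_partial_sum i > 0"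
  unfolding recip_partial_sum_def using d_1_ge_2
  by (intro sum_pos2[of _ 1]) auto

lemma cc_Suc_eq:
  assumes "0 < s"
  shows "cc d n s (Suc j) = cc_const * s powr recip_partial_sum (Suc j)"
proof (induction j)
  case 0
  have "cc d n s (Suc 0) = (real (dmax d n) ^ 2) powr (1 / real (d 1)) * s powr (1 / real (d 1))"
    using assms by (simp add: powr_mult)
  then show ?case unfolding cc_const_def recip_partial_sum_def by simp
next
  case (Suc j)
  have "recip_partial_sum (Suc (Suc j)) = recip_partial_sum (Suc j) + 1 / real (d (Suc (Suc j)))"
    unfolding recip_partial_sum_def by simp
  then show ?case using Suc by (simp add: powr_add)
qed

lemma cc_eq: "0 < s \<Longrightarrow> 1 \<le> i \<Longrightarrow> cc d n s i = cc_const * s powr recip_partial_sum i"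
  using cc_Suc_eq[of s "i - 1"] by simp

lemma cc_pos: "0 < s \<Longrightarrow> 1 \<le> i \<Longrightarrow> cc d n s i > 0"
  using cc_eq cc_const_pos by simp

definition scale :: "real \<Rightarrow> real" where
  "scale s = s powr nu d n"

lemma scale_pos: "0 < s \<Longrightarrow> 0 < scale s"
  unfolding scale_def by simp

lemma recip_partial_sum_less_nu:
  assumes "1 \<le> i" "i \<le> n - 1"
  shows "recip_partial_sum i < nu d n"
proof -
  have "recip_partial_sum i \<le> recip_partial_sum (n - 1)"
    unfolding recip_partial_sum_def by (rule sum_mono2) (use assms in auto)
  also have "\<dots> < real (d n) / (real (d n) - 1) * recip_partial_sum (n - 1)"
    using d_n_ge_2 recip_partial_sum_pos[of "n - 1"] n_ge_3 by (simp add: field_simps)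
  also have "\<dots> = nu d n"
    unfolding nu_def recip_partial_sum_def ..
  finally show ?thesis .
qed

lemma nu_pos: "nu d n > 0"
proof -
  have "recip_partial_sum 1 < nu d n"
    using n_ge_3 by (intro recip_partial_sum_less_nu) auto
  then show ?thesis using recip_partial_sum_pos[of 1] by simp
qed

lemma scale_tendsto_0: "(scale \<longlongrightarrow> 0) (at_right 0)"
  unfolding scale_def by (rule tendsto_powr_at_right_0[OF nu_pos])

lemma cc_tendsto_0:
  assumes "1 \<le> i"
  shows "((\<lambda>s. cc d n s i) \<longlongrightarrow> 0) (at_right 0)"
proof -
  have "((\<lambda>s. cc_const * s powr recip_partial_sum i) \<longlongrightarrow> cc_const * 0) (at_right 0)"
    by (intro tendsto_intros tendsto_powr_at_right_0 recip_partial_sum_pos assms)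
  moreover have "\<forall>\<^sub>F s in at_right 0. cc_const * s powr recip_partial_sum i = cc d n s i"
    using eventually_at_right_less by (rule eventually_mono) (metis cc_eq assms)
  ultimately show ?thesis by (simp add: Lim_transform_eventually)
qed

lemma scale_over_cc_tendsto_0:
  assumes "1 \<le> i" "i \<le> n - 1"
  shows "((\<lambda>s. scale s / cc d n s i) \<longlongrightarrow> 0) (at_right 0)"
proof -
  have "((\<lambda>s. s powr (nu d n - recip_partial_sum i) / cc_const) \<longlongrightarrow> 0 / cc_const) (at_right 0)"
    using recip_partial_sum_less_nu[OF assms]
    by (intro tendsto_intros tendsto_powr_at_right_0) (use cc_const_pos in simp_all)
  moreover have "\<forall>\<^sub>F s in at_right 0. s powr (nu d n - recip_partial_sum i) / cc_const = scale s / cc d n s i"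
    using eventually_at_right_less
    by (rule eventually_mono) (use assms cc_const_pos in \<open>simp add: cc_eq scale_def powr_diff\<close>)
  ultimately show ?thesis by (simp add: Lim_transform_eventually)
qed

lemma alternating_sum_DD: "(\<Sum>i\<in>{1..n-1}. int (DD d i) * (-1) ^ i) = int (d n) - int (d 1)"
proof -
  have "(\<Sum>i\<in>{1..m}. int (DD d i) * (-1) ^ i) = (-1) ^ m * int (d (Suc m)) - int (d 1)" for m
    by (induction m) (simp_all add: DD_def algebra_simps)
  moreover have "even (n - 1)" using n_odd n_ge_3 by simp
  ultimately show ?thesis using n_ge_3 by simp
qed

section \<open>Factorisations of \<open>R\<^sub>n\<close>\<close>

definition pole_pow :: "real \<Rightarrow> nat \<Rightarrow> complex" where
  "pole_pow s i = of_real (cc d n s i ^ DD d i)"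

definition outer_factor :: "real \<Rightarrow> complex \<Rightarrow> complex" where
  "outer_factor s w = (\<Prod>i\<in>{1..n-1}. (1 - pole_pow s i / w ^ DD d i) powi ((-1) ^ i))"

definition inner_factor :: "real \<Rightarrow> complex \<Rightarrow> complex" where
  "inner_factor s w = (\<Prod>i\<in>{1..n-1}. (1 - w ^ DD d i / pole_pow s i) powi ((-1) ^ i))"

definition inner_const :: "real \<Rightarrow> complex" where
  "inner_const s = (\<Prod>i\<in>{1..n-1}. (- pole_pow s i) powi ((-1) ^ i))"

lemma pole_pow_nonzero: "0 < s \<Longrightarrow> i \<in> {1..n-1} \<Longrightarrow> pole_pow s i \<noteq> 0"
  unfolding pole_pow_def using cc_pos[of s i] by auto

lemma norm_pole_pow: "0 < s \<Longrightarrow> i \<in> {1..n-1} \<Longrightarrow> norm (pole_pow s i) = cc d n s i ^ DD d i"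
  unfolding pole_pow_def using cc_pos[of s i] by (simp add: norm_power)

lemma inner_const_nonzero: "0 < s \<Longrightarrow> inner_const s \<noteq> 0"
  unfolding inner_const_def using pole_pow_nonzero by (auto simp: prod_zero_iff)

lemma Rfun_eq_inner:
  assumes "0 < s"
  shows "Rfun d n S T s w = of_real S * inner_const s * inner_factor s w / w ^ d n + of_real T"
proof -
  have factor: "(w ^ DD d i - of_real (cc d n s i ^ DD d i)) powi ((-1) ^ i)
      = (- pole_pow s i) powi ((-1) ^ i) * (1 - w ^ DD d i / pole_pow s i) powi ((-1) ^ i)"
    if "i \<in> {1..n-1}" for i
  proof -
    have "w ^ DD d i - of_real (cc d n s i ^ DD d i) = (- pole_pow s i) * (1 - w ^ DD d i / pole_pow s i)"
      using pole_pow_nonzero[OF assms that] by (simp add: pole_pow_def field_simps)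
    then show ?thesis by (simp only: power_int_mult_distrib)
  qed
  have "(\<Prod>i\<in>{1..n-1}. (w ^ DD d i - of_real (cc d n s i ^ DD d i)) powi ((-1) ^ i))
      = inner_const s * inner_factor s w"
    unfolding inner_const_def inner_factor_def prod.distrib[symmetric] by (rule prod.cong[OF refl factor])
  then show ?thesis unfolding Rfun_def by (simp add: divide_inverse ac_simps)
qed

text \<open>The exponents \<open>\<plusminus>D\<^sub>i\<close> sum to \<open>d\<^sub>n - d\<^sub>1\<close>, which turns the pole of order \<open>d\<^sub>n\<close> at the
  origin into the behaviour \<open>z\<^bsup>-d\<^sub>1\<^esup>\<close> at large \<open>|z|\<close>.\<close>
lemma Rfun_eq_outer:
  assumes "0 < s" "w \<noteq> 0"
  shows "Rfun d n S T s w = of_real S * outer_factor s w / w ^ d 1 + of_real T"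
proof -
  have factor: "(w ^ DD d i - of_real (cc d n s i ^ DD d i)) powi ((-1) ^ i)
      = w powi (int (DD d i) * (-1) ^ i) * (1 - pole_pow s i / w ^ DD d i) powi ((-1) ^ i)" for i
  proof -
    have "w ^ DD d i - of_real (cc d n s i ^ DD d i) = w ^ DD d i * (1 - pole_pow s i / w ^ DD d i)"
      using assms(2) by (simp add: pole_pow_def field_simps)
    then show ?thesis by (simp add: power_int_mult_distrib power_int_mult)
  qed
  have "(\<Prod>i\<in>{1..n-1}. (w ^ DD d i - of_real (cc d n s i ^ DD d i)) powi ((-1) ^ i))
      = (\<Prod>i\<in>{1..n-1}. w powi (int (DD d i) * (-1) ^ i) * (1 - pole_pow s i / w ^ DD d i) powi ((-1) ^ i))"
    by (rule prod.cong[OF refl factor])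
  also have "\<dots> = w powi (int (d n) - int (d 1)) * outer_factor s w"
    unfolding outer_factor_def prod.distrib prod_power_int_eq_power_int_sum[OF assms(2)]
      alternating_sum_DD ..
  also have "w powi (int (d n) - int (d 1)) = w ^ d n / w ^ d 1"
    using assms(2) by (simp add: power_int_diff)
  finally show ?thesis unfolding Rfun_def using assms(2) by (simp add: field_simps)
qed

lemma tendsto_outer_factor:
  fixes s :: "'p \<Rightarrow> real"
  assumes s: "filterlim s (at_right 0) F" and r: "r > 0" and w: "\<forall>\<^sub>F p in F. r \<le> norm (w p)"
  shows "((\<lambda>p. outer_factor (s p) (w p)) \<longlongrightarrow> 1) F"
  unfolding outer_factor_def
proof (rule tendsto_prod_one_minus_power_int)
  fix i assume i: "i \<in> {1..n-1}"
  have "((\<lambda>p. (cc d n (s p) i / r) ^ DD d i) \<longlongrightarrow> (0 / r) ^ DD d i) F"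
    using i r by (intro tendsto_intros filterlim_compose[OF cc_tendsto_0 s]) auto
  then have "((\<lambda>p. (cc d n (s p) i / r) ^ DD d i) \<longlongrightarrow> 0) F"
    by (simp only: div_0 zero_power[OF DD_pos[OF i]])
  moreover have "\<forall>\<^sub>F p in F. norm (pole_pow (s p) i / w p ^ DD d i) \<le> (cc d n (s p) i / r) ^ DD d i"
    using w eventually_compose_filterlim[OF eventually_at_right_less s]
  proof eventually_elim
    case (elim p)
    then have "norm (pole_pow (s p) i / w p ^ DD d i) = (cc d n (s p) i / norm (w p)) ^ DD d i"
      using i by (simp add: norm_pole_pow norm_divide norm_power power_divide)
    also have "\<dots> \<le> (cc d n (s p) i / r) ^ DD d i"
      using elim r cc_pos[of "s p" i] i by (intro power_mono divide_left_mono) (auto intro!: mult_pos_pos)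
    finally show ?case .
  qed
  ultimately show "((\<lambda>p. pole_pow (s p) i / w p ^ DD d i) \<longlongrightarrow> 0) F"
    by (rule Lim_null_comparison[rotated])
qed

lemma tendsto_inner_factor:
  fixes s :: "'p \<Rightarrow> real"
  assumes s: "filterlim s (at_right 0) F" and w: "\<forall>\<^sub>F p in F. norm (w p) \<le> K * scale (s p)"
  shows "((\<lambda>p. inner_factor (s p) (w p)) \<longlongrightarrow> 1) F"
  unfolding inner_factor_def
proof (rule tendsto_prod_one_minus_power_int)
  fix i assume i: "i \<in> {1..n-1}"
  have "((\<lambda>p. (K * (scale (s p) / cc d n (s p) i)) ^ DD d i) \<longlongrightarrow> (K * 0) ^ DD d i) F"
    using i by (intro tendsto_intros filterlim_compose[OF scale_over_cc_tendsto_0 s]) auto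
  then have "((\<lambda>p. (K * (scale (s p) / cc d n (s p) i)) ^ DD d i) \<longlongrightarrow> 0) F"
    by (simp only: mult_zero_right zero_power[OF DD_pos[OF i]])
  moreover have "\<forall>\<^sub>F p in F.
      norm (w p ^ DD d i / pole_pow (s p) i) \<le> (K * (scale (s p) / cc d n (s p) i)) ^ DD d i"
    using w eventually_compose_filterlim[OF eventually_at_right_less s]
  proof eventually_elim
    case (elim p)
    then have "norm (w p ^ DD d i / pole_pow (s p) i) = (norm (w p) / cc d n (s p) i) ^ DD d i"
      using i by (simp add: norm_pole_pow norm_divide norm_power power_divide)
    also have "\<dots> \<le> (K * (scale (s p) / cc d n (s p) i)) ^ DD d i"
      using elim cc_pos[of "s p" i] i by (intro power_mono divide_right_mono) (auto simp: field_simps)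
    finally show ?case .
  qed
  ultimately show "((\<lambda>p. w p ^ DD d i / pole_pow (s p) i) \<longlongrightarrow> 0) F"
    by (rule Lim_null_comparison[rotated])
qed

lemma isCont_Rfun:
  assumes "0 < s" "w \<noteq> 0" "\<forall>i\<in>{1..n-1}. norm w \<noteq> cc d n s i"
  shows "isCont (Rfun d n S T s) w"
proof -
  have "w ^ DD d i \<noteq> of_real (cc d n s i ^ DD d i)" if i: "i \<in> {1..n-1}" for i
  proof
    assume eq: "w ^ DD d i = of_real (cc d n s i ^ DD d i)"
    have c: "0 \<le> cc d n s i" using cc_pos[OF assms(1), of i] i by simp
    have "norm w ^ DD d i = cc d n s i ^ DD d i"
      using arg_cong[OF eq, of norm] c by (simp add: norm_power)
    then have "norm w = cc d n s i"
      using c DD_pos[OF i] by (rule power_eq_imp_eq_base[OF _ norm_ge_zero])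
    then show False using assms(3) i by blast
  qed
  then show ?thesis
    unfolding Rfun_def[abs_def] using assms(2) by (intro continuous_intros) auto
qed

lemma Rfun_no_limit_at_0:
  assumes s: "0 < s" and "S \<noteq> 0"
  shows "\<nexists>l. (Rfun d n S T s \<longlongrightarrow> l) (at 0)"
proof
  assume "\<exists>l. (Rfun d n S T s \<longlongrightarrow> l) (at 0)"
  then obtain l where "(Rfun d n S T s \<longlongrightarrow> l) (at 0)" by blast
  then have "((\<lambda>w. Rfun d n S T s w * w ^ d n) \<longlongrightarrow> l * 0 ^ d n) (at 0)"
    by (intro tendsto_intros)
  then have zero: "((\<lambda>w. Rfun d n S T s w * w ^ d n) \<longlongrightarrow> 0) (at 0)"
    using d_n_ge_2 by (simp add: power_0_left)
  have "(inner_factor s \<longlongrightarrow> 1) (at 0)"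
    unfolding inner_factor_def[abs_def]
  proof (rule tendsto_prod_one_minus_power_int)
    fix i assume i: "i \<in> {1..n-1}"
    moreover have "((\<lambda>w. w ^ DD d i / pole_pow s i) \<longlongrightarrow> 0 ^ DD d i / pole_pow s i) (at 0)"
      using pole_pow_nonzero[OF s i] by (intro tendsto_intros)
    ultimately show "((\<lambda>w. w ^ DD d i / pole_pow s i) \<longlongrightarrow> 0) (at 0)"
      using DD_pos by (simp add: zero_power)
  qed
  then have "((\<lambda>w. of_real S * inner_const s * inner_factor s w + of_real T * w ^ d n)
      \<longlongrightarrow> of_real S * inner_const s * 1 + of_real T * 0 ^ d n) (at 0)"
    by (intro tendsto_intros)
  moreover have "\<forall>\<^sub>F w in at 0. of_real S * inner_const s * inner_factor s w + of_real T * w ^ d n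
      = Rfun d n S T s w * w ^ d n"
    using eventually_neq_at_within[of 0 0 UNIV]
    by eventually_elim (simp add: Rfun_eq_inner[OF s] field_simps)
  ultimately have "((\<lambda>w. Rfun d n S T s w * w ^ d n) \<longlongrightarrow> of_real S * inner_const s) (at 0)"
    using d_n_ge_2 by (simp add: power_0_left Lim_transform_eventually)
  then have "of_real S * inner_const s = 0"
    using zero
    by (rule tendsto_unique[rotated]) simp
  then show False using assms inner_const_nonzero by simp
qed

lemma Rfun_tendsto_at_infinity:
  assumes s: "0 < s"
  shows "(Rfun d n S T s \<longlongrightarrow> of_real T) at_infinity"
proof -
  have "(outer_factor s \<longlongrightarrow> 1) at_infinity"
    unfolding outer_factor_def[abs_def]
  proof (rule tendsto_prod_one_minus_power_int)
    fix i assume "i \<in> {1..n-1}"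
    then have "((\<lambda>w. pole_pow s i * inverse w ^ DD d i) \<longlongrightarrow> pole_pow s i * 0 ^ DD d i) at_infinity"
      by (intro tendsto_intros tendsto_inverse_0)
    then show "((\<lambda>w. pole_pow s i / w ^ DD d i) \<longlongrightarrow> 0) at_infinity"
      using DD_pos \<open>i \<in> {1..n-1}\<close> by (simp add: zero_power divide_inverse power_inverse)
  qed
  then have "((\<lambda>w. of_real S * outer_factor s w * inverse w ^ d 1 + of_real T)
      \<longlongrightarrow> of_real S * 1 * 0 ^ d 1 + of_real T) at_infinity"
    by (intro tendsto_intros tendsto_inverse_0)
  moreover have "\<forall>\<^sub>F w in at_infinity. of_real S * outer_factor s w * inverse w ^ d 1 + of_real T
      = Rfun d n S T s w"
    unfolding eventually_at_infinity
  proof (intro exI[of _ 1] allI impI)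
    fix w :: complex
    assume "1 \<le> norm w"
    then have "w \<noteq> 0" by auto
    then show "of_real S * outer_factor s w * inverse w ^ d 1 + of_real T = Rfun d n S T s w"
      by (simp add: Rfun_eq_outer[OF s] divide_inverse power_inverse)
  qed
  ultimately show ?thesis
    using d_1_ge_2 by (simp add: power_0_left Lim_transform_eventually)
qed

lemma eventually_scale_less_cc:
  "\<forall>\<^sub>F s in at_right 0. \<forall>i\<in>{1..n-1}. K * scale s < cc d n s i"
proof (rule eventually_ball_finite[OF finite_atLeastAtMost], rule ballI)
  fix i assume i: "i \<in> {1..n-1}"
  have "\<forall>\<^sub>F s in at_right 0. scale s / cc d n s i < 1 / (\<bar>K\<bar> + 1)"
    using scale_over_cc_tendsto_0[of i] i by (intro order_tendstoD) auto
  then show "\<forall>\<^sub>F s in at_right 0. K * scale s < cc d n s i"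
    using eventually_at_right_less
  proof eventually_elim
    case (elim s)
    then have "(\<bar>K\<bar> + 1) * scale s < cc d n s i"
      using cc_pos[of s i] i by (simp add: field_simps)
    moreover have "K * scale s \<le> (\<bar>K\<bar> + 1) * scale s"
      using scale_pos[of s] elim by (intro mult_right_mono) auto
    ultimately show ?case by linarith
  qed
qed

lemma eventually_cc_less:
  assumes "r > 0"
  shows "\<forall>\<^sub>F s in at_right 0. \<forall>i\<in>{1..n-1}. cc d n s i < r"
proof (rule eventually_ball_finite[OF finite_atLeastAtMost], rule ballI)
  fix i assume "i \<in> {1..n-1}"
  then show "\<forall>\<^sub>F s in at_right 0. cc d n s i < r"
    using cc_tendsto_0[of i] assms by (intro order_tendstoD) auto
qed

end

section \<open>The scaling limits of \<open>R\<^sub>n\<close>\<close>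

locale rn_family = rn_degrees +
  fixes S T z0 :: "real \<Rightarrow> real"
  assumes R_z0: "\<forall>\<^sub>F s in at_right 0. Rfun d n (S s) (T s) s (of_real (z0 s)) = 1"
    and S_asymp: "((\<lambda>s. S s / s powr nu d n) \<longlongrightarrow> mu d n) (at_right 0)"
    and T_asymp: "((\<lambda>s. T s / s powr nu d n) \<longlongrightarrow> (real (d 1 * d n) - 1) * mu d n) (at_right 0)"
    and z0_asymp: "((\<lambda>s. z0 s / s powr nu d n) \<longlongrightarrow> real (d 1 * d n) * mu d n) (at_right 0)"
begin

abbreviation k :: nat where "k \<equiv> d 1 * d n"
abbreviation \<mu> :: real where "\<mu> \<equiv> mu d n"
abbreviation R :: "real \<Rightarrow> complex \<Rightarrow> complex" where "R s \<equiv> Rfun d n (S s) (T s) s"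

lemma k_ge_2: "k \<ge> 2"
  using mult_le_mono[OF d_1_ge_2 d_n_ge_2] by simp

lemma mu_pos: "\<mu> > 0"
proof -
  have "d 1 > 0" "d n > 0" "dmax d n > 0"
    using d_1_ge_2 d_n_ge_2 dmax_ge_2 by auto
  then show ?thesis unfolding mu_def by (intro mult_pos_pos) simp_all
qed

lemma k_mu_pos: "real k * \<mu> > 0" "(real k - 1) * \<mu> > 0"
proof -
  have "real k \<ge> 2" using of_nat_mono[OF k_ge_2] by simp
  then show "real k * \<mu> > 0" "(real k - 1) * \<mu> > 0" using mu_pos by simp_all
qed

lemma of_real_k_mu_nonzero: "(of_real (real k * \<mu>) :: complex) \<noteq> 0"
  using k_mu_pos(1) by (metis of_real_eq_0_iff less_irrefl)

lemma eventually_pos: "\<forall>\<^sub>F s in at_right 0. 0 < s \<and> 0 < S s \<and> 0 < T s \<and> 0 < z0 s"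
proof -
  have "\<forall>\<^sub>F s in at_right 0. 0 < S s / scale s"
    using order_tendstoD(1)[OF S_asymp mu_pos] unfolding scale_def .
  moreover have "\<forall>\<^sub>F s in at_right 0. 0 < T s / scale s"
    using order_tendstoD(1)[OF T_asymp k_mu_pos(2)] unfolding scale_def .
  moreover have "\<forall>\<^sub>F s in at_right 0. 0 < z0 s / scale s"
    using order_tendstoD(1)[OF z0_asymp k_mu_pos(1)] unfolding scale_def .
  ultimately show ?thesis using eventually_at_right_less
  proof eventually_elim
    case (elim s)
    moreover have "scale s > 0" using scale_pos elim by blast
    ultimately show ?case by (simp add: zero_less_divide_iff)
  qed
qed

lemma tendsto_scaled:
  fixes s :: "'p \<Rightarrow> real"
  assumes "filterlim s (at_right 0) F"
  shows "((\<lambda>p. of_real (S (s p) / scale (s p))) \<longlongrightarrow> (of_real \<mu> :: complex)) F"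
    and "((\<lambda>p. of_real (T (s p) / scale (s p))) \<longlongrightarrow> (of_real ((real k - 1) * \<mu>) :: complex)) F"
    and "((\<lambda>p. of_real (z0 (s p) / scale (s p))) \<longlongrightarrow> (of_real (real k * \<mu>) :: complex)) F"
  unfolding scale_def
  by (rule tendsto_of_real, rule filterlim_compose[OF S_asymp assms] filterlim_compose[OF T_asymp assms]
      filterlim_compose[OF z0_asymp assms])+

lemma T_tendsto_0: "((\<lambda>s. of_real (T s) :: complex) \<longlongrightarrow> 0) (at_right 0)"
proof -
  have "((\<lambda>s. of_real (T s / scale s) * of_real (scale s) :: complex)
      \<longlongrightarrow> of_real ((real k - 1) * \<mu>) * of_real 0) (at_right 0)"
    by (rule tendsto_mult[OF tendsto_scaled(2)[OF filterlim_ident] tendsto_of_real[OF scale_tendsto_0]])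
  moreover have "\<forall>\<^sub>F s in at_right 0. of_real (T s / scale s) * of_real (scale s) = (of_real (T s) :: complex)"
    using eventually_at_right_less
  proof eventually_elim
    case (elim s)
    then have "scale s \<noteq> 0" using scale_pos by fastforce
    then show ?case by (simp add: field_simps)
  qed
  ultimately show ?thesis by (simp add: Lim_transform_eventually)
qed

definition inner_coeff :: "real \<Rightarrow> complex" where
  "inner_coeff s = of_real (S s) * inner_const s / of_real (scale s) ^ d n"

lemma Rfun_scaled_eq_inner:
  assumes "0 < s" "u \<noteq> 0"
  shows "R s (of_real (scale s) * u)
    = (inner_coeff s * inner_factor s (of_real (scale s) * u) + of_real (T s) * u ^ d n) / u ^ d n"
  using assms scale_pos[OF assms(1)]
  by (simp add: Rfun_eq_inner inner_coeff_def power_mult_distrib field_simps)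

text \<open>The constant of the inner expansion is never computed: the normalisation \<open>R\<^sub>n(z\<^sub>0) = 1\<close>
  determines its limit.\<close>
lemma inner_coeff_tendsto: "(inner_coeff \<longlongrightarrow> of_real (real k * \<mu>) ^ d n) (at_right 0)"
proof -
  define Z where "Z s = (of_real (z0 s / scale s) :: complex)" for s
  have Z: "(Z \<longlongrightarrow> of_real (real k * \<mu>)) (at_right 0)"
    unfolding Z_def by (rule tendsto_scaled(3)[OF filterlim_ident])
  have "\<forall>\<^sub>F s in at_right 0. z0 s / scale s < real k * \<mu> + 1"
    using z0_asymp unfolding scale_def by (intro order_tendstoD) auto
  then have "\<forall>\<^sub>F s in at_right 0. norm (of_real (z0 s) :: complex) \<le> (real k * \<mu> + 1) * scale s"
    using eventually_pos by eventually_elim (use scale_pos in \<open>auto simp: field_simps\<close>)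
  then have Q: "((\<lambda>s. inner_factor s (of_real (z0 s))) \<longlongrightarrow> 1) (at_right 0)"
    by (rule tendsto_inner_factor[OF filterlim_ident])
  have "((\<lambda>s. (1 - of_real (T s)) * Z s ^ d n / inner_factor s (of_real (z0 s)))
      \<longlongrightarrow> (1 - 0) * of_real (real k * \<mu>) ^ d n / 1) (at_right 0)"
    by (intro tendsto_intros T_tendsto_0 Z Q) simp
  moreover have "\<forall>\<^sub>F s in at_right 0. (1 - of_real (T s)) * Z s ^ d n / inner_factor s (of_real (z0 s))
      = inner_coeff s"
    using R_z0 eventually_pos tendsto_imp_eventually_ne[OF Q one_neq_zero]
  proof eventually_elim
    case (elim s)
    then have "of_real (z0 s) = of_real (scale s) * Z s" "Z s \<noteq> 0"
      using scale_pos[of s] by (auto simp: Z_def)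
    then show ?case
      using elim Rfun_scaled_eq_inner[of s "Z s"] by (simp add: field_simps)
  qed
  ultimately show ?thesis by (simp add: Lim_transform_eventually)
qed

lemma sph_ext_R_inner_scale:
  assumes s: "0 < s" "0 < S s" and u: "norm u \<le> K" and K: "\<forall>i\<in>{1..n-1}. K * scale s < cc d n s i"
  defines "D \<equiv> inner_coeff s * inner_factor s (of_real (scale s) * u) + of_real (T s) * u ^ d n"
  assumes D: "D \<noteq> 0"
  shows "recip_coord (sph_ext (R s) (Some (of_real (scale s) * u))) = u ^ d n / D"
    and "sph_ext (R s) (Some (of_real (scale s) * u)) \<noteq> Some 0"
    and "u \<noteq> 0 \<Longrightarrow> sph_ext (R s) (Some (of_real (scale s) * u)) = Some (R s (of_real (scale s) * u))
      \<and> R s (of_real (scale s) * u) \<noteq> 0"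
proof -
  have "sph_ext (R s) (Some (of_real (scale s) * u))
      = (if u = 0 then None else Some (D / u ^ d n))"
  proof (cases "u = 0")
    case True
    then show ?thesis
      using s by (simp add: sph_ext_Some_no_limit Rfun_no_limit_at_0)
  next
    case False
    have "norm (of_real (scale s) * u) \<le> K * scale s"
      using u scale_pos[OF s(1)] by (simp add: norm_mult mult.commute mult_left_mono)
    then have "\<forall>i\<in>{1..n-1}. norm (of_real (scale s) * u) \<noteq> cc d n s i"
      using K by force
    then have "isCont (R s) (of_real (scale s) * u)"
      using False scale_pos[OF s(1)] by (intro isCont_Rfun s) auto
    then show ?thesis
      using False s(1) by (simp add: sph_ext_Some_isCont Rfun_scaled_eq_inner D_def)
  qed
  moreover have "u \<noteq> 0 \<Longrightarrow> R s (of_real (scale s) * u) = D / u ^ d n"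
    using s(1) by (simp add: Rfun_scaled_eq_inner D_def)
  ultimately show "recip_coord (sph_ext (R s) (Some (of_real (scale s) * u))) = u ^ d n / D"
    and "sph_ext (R s) (Some (of_real (scale s) * u)) \<noteq> Some 0"
    and "u \<noteq> 0 \<Longrightarrow> sph_ext (R s) (Some (of_real (scale s) * u)) = Some (R s (of_real (scale s) * u))
      \<and> R s (of_real (scale s) * u) \<noteq> 0"
    using D d_n_ge_2 by (auto simp: power_0_left)
qed

lemma tendsto_inner_denominator:
  fixes s :: "'p \<Rightarrow> real" and u :: "'p \<Rightarrow> complex"
  assumes s: "filterlim s (at_right 0) F" and u: "\<forall>\<^sub>F p in F. norm (u p) \<le> K"
  shows "((\<lambda>p. inner_coeff (s p) * inner_factor (s p) (of_real (scale (s p)) * u p)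
      + of_real (T (s p)) * u p ^ d n) \<longlongrightarrow> of_real (real k * \<mu>) ^ d n) F"
proof -
  have "\<forall>\<^sub>F p in F. norm (of_real (scale (s p)) * u p) \<le> K * scale (s p)"
    using u eventually_compose_filterlim[OF eventually_pos s]
  proof eventually_elim
    case (elim p)
    then have "norm (of_real (scale (s p)) * u p) = scale (s p) * norm (u p)"
      using scale_pos[of "s p"] by (simp add: norm_mult)
    also have "\<dots> \<le> scale (s p) * K"
      using elim scale_pos[of "s p"] by (intro mult_left_mono) auto
    finally show ?case by (simp add: mult.commute)
  qed
  then have "((\<lambda>p. inner_factor (s p) (of_real (scale (s p)) * u p)) \<longlongrightarrow> 1) F"
    by (rule tendsto_inner_factor[OF s])
  moreover have "((\<lambda>p. of_real (T (s p)) * u p ^ d n) \<longlongrightarrow> 0) F"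
    by (rule tendsto_mult_Bfun_zero[OF filterlim_compose[OF T_tendsto_0 s] Bfun_power[OF BfunI[OF u]]])
  ultimately have "((\<lambda>p. inner_coeff (s p) * inner_factor (s p) (of_real (scale (s p)) * u p)
      + of_real (T (s p)) * u p ^ d n) \<longlongrightarrow> of_real (real k * \<mu>) ^ d n * 1 + 0) F"
    by (intro tendsto_intros filterlim_compose[OF inner_coeff_tendsto s])
  then show ?thesis by simp
qed

lemma inner_expansion:
  fixes s :: "'p \<Rightarrow> real" and u :: "'p \<Rightarrow> complex"
  assumes s: "filterlim s (at_right 0) F" and u: "Bfun u F"
  defines "w p \<equiv> of_real (scale (s p)) * u p"
  shows "\<forall>\<^sub>F p in F. sph_ext (R (s p)) (Some (w p)) \<noteq> Some 0
      \<and> (u p \<noteq> 0 \<longrightarrow> sph_ext (R (s p)) (Some (w p)) = Some (R (s p) (w p)) \<and> R (s p) (w p) \<noteq> 0)"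
    and "((\<lambda>p. recip_coord (sph_ext (R (s p)) (Some (w p))) - (u p / of_real (real k * \<mu>)) ^ d n)
      \<longlongrightarrow> 0) F"
proof -
  obtain K where K: "\<forall>\<^sub>F p in F. norm (u p) \<le> K"
    using u by (rule BfunE)
  define D where "D p = inner_coeff (s p) * inner_factor (s p) (w p) + of_real (T (s p)) * u p ^ d n" for p
  have D: "(D \<longlongrightarrow> of_real (real k * \<mu>) ^ d n) F"
    unfolding D_def w_def by (rule tendsto_inner_denominator[OF s K])
  have B: "of_real (real k * \<mu>) ^ d n \<noteq> (0::complex)"
    using of_real_k_mu_nonzero by simp
  have ev: "\<forall>\<^sub>F p in F. recip_coord (sph_ext (R (s p)) (Some (w p))) = u p ^ d n / D p
      \<and> sph_ext (R (s p)) (Some (w p)) \<noteq> Some 0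
      \<and> (u p \<noteq> 0 \<longrightarrow> sph_ext (R (s p)) (Some (w p)) = Some (R (s p) (w p)) \<and> R (s p) (w p) \<noteq> 0)"
    using eventually_compose_filterlim[OF eventually_pos s]
      eventually_compose_filterlim[OF eventually_scale_less_cc[of K] s] K tendsto_imp_eventually_ne[OF D B]
  proof eventually_elim
    case (elim p)
    then have "0 < s p" "0 < S (s p)" "norm (u p) \<le> K" "\<forall>i\<in>{1..n-1}. K * scale (s p) < cc d n (s p) i"
      "inner_coeff (s p) * inner_factor (s p) (of_real (scale (s p)) * u p) + of_real (T (s p)) * u p ^ d n \<noteq> 0"
      by (simp_all add: D_def w_def)
    with sph_ext_R_inner_scale show ?case unfolding D_def w_def by blast
  qed
  then show "\<forall>\<^sub>F p in F. sph_ext (R (s p)) (Some (w p)) \<noteq> Some 0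
      \<and> (u p \<noteq> 0 \<longrightarrow> sph_ext (R (s p)) (Some (w p)) = Some (R (s p) (w p)) \<and> R (s p) (w p) \<noteq> 0)"
    by (rule eventually_mono) blast
  have "((\<lambda>p. (inverse (D p) - inverse (of_real (real k * \<mu>) ^ d n)) * u p ^ d n) \<longlongrightarrow> 0) F"
    using D B by (intro tendsto_mult_Bfun_zero Bfun_power u LIM_zero tendsto_intros)
  moreover have "\<forall>\<^sub>F p in F. (inverse (D p) - inverse (of_real (real k * \<mu>) ^ d n)) * u p ^ d n
      = recip_coord (sph_ext (R (s p)) (Some (w p))) - (u p / of_real (real k * \<mu>)) ^ d n"
    using ev by eventually_elim (simp add: power_divide divide_inverse power_inverse algebra_simps)
  ultimately show "((\<lambda>p. recip_coord (sph_ext (R (s p)) (Some (w p))) - (u p / of_real (real k * \<mu>)) ^ d n)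
      \<longlongrightarrow> 0) F"
    by (rule Lim_transform_eventually)
qed

lemma outer_expansion:
  fixes s :: "'p \<Rightarrow> real" and z :: "'p \<Rightarrow> complex"
  assumes s: "filterlim s (at_right 0) F" and r: "r > 0" and z: "\<forall>\<^sub>F p in F. r \<le> norm (z p)"
  shows "\<forall>\<^sub>F p in F. sph_ext (R (s p)) (Some (z p)) = Some (R (s p) (z p))"
    and "((\<lambda>p. R (s p) (z p) / of_real (scale (s p)) - outer_profile \<mu> (d 1) k (z p)) \<longlongrightarrow> 0) F"
proof -
  have pos: "\<forall>\<^sub>F p in F. 0 < s p \<and> 0 < S (s p) \<and> 0 < T (s p) \<and> 0 < z0 (s p)"
    by (rule eventually_compose_filterlim[OF eventually_pos s])
  show "\<forall>\<^sub>F p in F. sph_ext (R (s p)) (Some (z p)) = Some (R (s p) (z p))"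
    using pos z eventually_compose_filterlim[OF eventually_cc_less[OF r] s]
  proof eventually_elim
    case (elim p)
    then have "z p \<noteq> 0" "\<forall>i\<in>{1..n-1}. norm (z p) \<noteq> cc d n (s p) i"
      using r by force+
    then show ?case
      using elim by (intro sph_ext_Some_isCont isCont_Rfun) auto
  qed
  have "((\<lambda>p. of_real (S (s p) / scale (s p)) * outer_factor (s p) (z p) - of_real \<mu>)
      \<longlongrightarrow> of_real \<mu> * 1 - of_real \<mu>) F"
    by (intro tendsto_intros tendsto_scaled(1)[OF s] tendsto_outer_factor[OF s r z])
  then have "((\<lambda>p. (of_real (S (s p) / scale (s p)) * outer_factor (s p) (z p) - of_real \<mu>)
      * inverse (z p) ^ d 1) \<longlongrightarrow> 0) F"
    by (intro tendsto_mult_Bfun_zero Bfun_power Bfun_inverse_of_norm_ge[OF r z]) simp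
  moreover have "((\<lambda>p. of_real (T (s p) / scale (s p)) - of_real ((real k - 1) * \<mu>) :: complex)
      \<longlongrightarrow> 0) F"
    by (rule LIM_zero[OF tendsto_scaled(2)[OF s]])
  ultimately have "((\<lambda>p. (of_real (S (s p) / scale (s p)) * outer_factor (s p) (z p) - of_real \<mu>)
      * inverse (z p) ^ d 1 + (of_real (T (s p) / scale (s p)) - of_real ((real k - 1) * \<mu>))) \<longlongrightarrow> 0) F"
    by (rule tendsto_add_zero)
  moreover have "\<forall>\<^sub>F p in F. (of_real (S (s p) / scale (s p)) * outer_factor (s p) (z p) - of_real \<mu>)
      * inverse (z p) ^ d 1 + (of_real (T (s p) / scale (s p)) - of_real ((real k - 1) * \<mu>))
      = R (s p) (z p) / of_real (scale (s p)) - outer_profile \<mu> (d 1) k (z p)"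
    using pos z
  proof eventually_elim
    case (elim p)
    then have "z p \<noteq> 0" "scale (s p) \<noteq> 0"
      using r scale_pos[of "s p"] by auto
    then show ?case
      using elim by (simp add: Rfun_eq_outer outer_profile_def divide_inverse power_inverse algebra_simps)
  qed
  ultimately show "((\<lambda>p. R (s p) (z p) / of_real (scale (s p)) - outer_profile \<mu> (d 1) k (z p)) \<longlongrightarrow> 0) F"
    by (rule Lim_transform_eventually)
qed

section \<open>Convergence of the second iterate\<close>

lemma iterate_close_to_h2_uniformly:
  assumes r: "r > 0" and e: "e > 0"
  shows "\<forall>\<^sub>F s in at_right 0. \<forall>z\<in>{z. r \<le> norm z}.
    cdist (sph_ext (R s) (sph_ext (R s) (Some z))) (sph_ext (h2 (d 1) (d n)) (Some z)) < e"
proof (rule eventually_cdist_less_uniformly[OF _ _ e])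
  let ?G = "at_right 0 \<times>\<^sub>F principal {z. r \<le> norm z}"
  have s: "filterlim fst (at_right 0) ?G" by (rule filterlim_fst)
  have z: "\<forall>\<^sub>F p in ?G. r \<le> norm (snd p)" by (simp add: eventually_prod_principal_iff)
  define c where "c = (of_real (real k * \<mu>) :: complex)"
  have c: "c \<noteq> 0" unfolding c_def by (rule of_real_k_mu_nonzero)
  define u where "u p = R (fst p) (snd p) / of_real (scale (fst p))" for p
  define V where "V p = outer_profile \<mu> (d 1) k (snd p)" for p :: "real \<times> complex"
  have uV: "((\<lambda>p. u p - V p) \<longlongrightarrow> 0) ?G"
    unfolding u_def V_def by (rule outer_expansion(2)[OF s r z])
  have V: "Bfun V ?G" unfolding V_def by (rule Bfun_outer_profile[OF r z])
  have u: "Bfun u ?G" by (rule Bfun_of_tendsto_diff_zero[OF uV V])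
  note inner = inner_expansion[OF s u]
  have X: "\<forall>\<^sub>F p in ?G. sph_ext (R (fst p)) (sph_ext (R (fst p)) (Some (snd p)))
      = sph_ext (R (fst p)) (Some (of_real (scale (fst p)) * u p))"
    using outer_expansion(1)[OF s r z] eventually_compose_filterlim[OF eventually_pos s]
  proof eventually_elim
    case (elim p)
    then have "scale (fst p) \<noteq> 0" using scale_pos by fastforce
    then show ?case using elim by (simp add: u_def)
  qed
  have Y: "\<forall>\<^sub>F p in ?G. recip_coord (sph_ext (h2 (d 1) (d n)) (Some (snd p))) = (V p / c) ^ d n
      \<and> sph_ext (h2 (d 1) (d n)) (Some (snd p)) \<noteq> Some 0"
    using z
  proof eventually_elim
    case (elim p)
    then have "snd p \<noteq> 0" using r by auto
    then show ?case
      using recip_coord_h2_Some[of "d 1" "d n" \<mu> "snd p"] d_1_ge_2 d_n_ge_2 k_ge_2 mu_pos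
      by (simp add: V_def c_def)
  qed
  have "((\<lambda>p. (u p / c) ^ d n - (V p / c) ^ d n) \<longlongrightarrow> 0) ?G"
    using tendsto_divide[OF uV tendsto_const c] u V
    by (intro tendsto_power_diff_zero) (simp_all add: divide_inverse Bfun_mult left_diff_distrib)
  with inner(2) have "((\<lambda>p. recip_coord (sph_ext (R (fst p)) (Some (of_real (scale (fst p)) * u p)))
      - (V p / c) ^ d n) \<longlongrightarrow> 0) ?G"
    unfolding c_def by (rule tendsto_diff_zero_trans)
  then show "((\<lambda>p. recip_coord (sph_ext (R (fst p)) (sph_ext (R (fst p)) (Some (snd p))))
      - recip_coord (sph_ext (h2 (d 1) (d n)) (Some (snd p)))) \<longlongrightarrow> 0) ?G"
    by (rule Lim_transform_eventually) (use X Y in \<open>auto elim: eventually_elim2\<close>)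
  show "\<forall>\<^sub>F p in ?G. sph_ext (R (fst p)) (sph_ext (R (fst p)) (Some (snd p))) \<noteq> Some 0
      \<and> sph_ext (h2 (d 1) (d n)) (Some (snd p)) \<noteq> Some 0"
    using X Y inner(1) by eventually_elim simp
qed

lemma iterate_close_to_h2_at_infinity:
  assumes e: "e > 0"
  shows "\<forall>\<^sub>F s in at_right 0. cdist (sph_ext (R s) (sph_ext (R s) None)) (sph_ext (h2 (d 1) (d n)) None) < e"
proof (rule eventually_cdist_less[OF _ _ e])
  define c where "c = (of_real (real k * \<mu>) :: complex)"
  define u where "u s = (of_real (T s / scale s) :: complex)" for s
  have u: "(u \<longlongrightarrow> of_real ((real k - 1) * \<mu>)) (at_right 0)"
    unfolding u_def by (rule tendsto_scaled(2)[OF filterlim_ident])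
  note inner = inner_expansion[OF filterlim_ident tendsto_imp_Bfun[OF u]]
  have X: "\<forall>\<^sub>F s in at_right 0. sph_ext (R s) (sph_ext (R s) None) = sph_ext (R s) (Some (of_real (scale s) * u s))"
    using eventually_pos
  proof eventually_elim
    case (elim s)
    then have "scale s \<noteq> 0" using scale_pos by fastforce
    then show ?case
      using elim by (simp add: sph_ext_None_tendsto[OF Rfun_tendsto_at_infinity] u_def)
  qed
  have "of_real \<mu> \<noteq> (0::complex)" "of_nat k - 1 \<noteq> (0::complex)"
    using mu_pos k_ge_2 of_nat_eq_1_iff[of k] by auto
  then have q: "of_nat k / (of_nat k - 1) = inverse (of_real ((real k - 1) * \<mu>) / c)"
    by (simp add: c_def field_simps)
  have Y: "sph_ext (h2 (d 1) (d n)) None = Some (inverse ((of_real ((real k - 1) * \<mu>) / c) ^ d n))"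
    unfolding power_inverse[symmetric] q[symmetric]
    by (rule sph_ext_h2_None) (use d_1_ge_2 k_ge_2 in auto)
  have "((\<lambda>s. (u s / c) ^ d n) \<longlongrightarrow> (of_real ((real k - 1) * \<mu>) / c) ^ d n) (at_right 0)"
    using of_real_k_mu_nonzero by (intro tendsto_intros u) (simp add: c_def)
  with inner(2) have "((\<lambda>s. recip_coord (sph_ext (R s) (Some (of_real (scale s) * u s)))
      - (of_real ((real k - 1) * \<mu>) / c) ^ d n) \<longlongrightarrow> 0) (at_right 0)"
    unfolding c_def by (rule tendsto_diff_zero_trans[OF _ LIM_zero])
  then show "((\<lambda>s. recip_coord (sph_ext (R s) (sph_ext (R s) None))
      - recip_coord (sph_ext (h2 (d 1) (d n)) None)) \<longlongrightarrow> 0) (at_right 0)"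
    by (rule Lim_transform_eventually)
      (rule eventually_mono[OF X], simp only: Y recip_coord.simps inverse_inverse_eq)
  show "\<forall>\<^sub>F s in at_right 0. sph_ext (R s) (sph_ext (R s) None) \<noteq> Some 0
      \<and> sph_ext (h2 (d 1) (d n)) None \<noteq> Some 0"
  proof -
    have "of_real ((real k - 1) * \<mu>) \<noteq> (0::complex)"
      using k_mu_pos(2) by (metis of_real_eq_0_iff less_irrefl)
    then have h2_nz: "sph_ext (h2 (d 1) (d n)) None \<noteq> Some 0"
      unfolding Y using of_real_k_mu_nonzero by (simp add: c_def)
    show ?thesis using X inner(1) by eventually_elim (use h2_nz in simp)
  qed
qed

section \<open>Convergence of the conjugated second iterate\<close>

lemma sph_ext_h1_None: "sph_ext (h1 k) None = Some (inverse (of_real ((real k - 1) * \<mu>) / of_real (real k * \<mu>)))"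
proof -
  have "of_real \<mu> \<noteq> (0::complex)" "of_nat k - 1 \<noteq> (0::complex)"
    using mu_pos k_ge_2 of_nat_eq_1_iff[of k] by auto
  then have "of_nat k / (of_nat k - 1) = inverse (of_real ((real k - 1) * \<mu>) / (of_real (real k * \<mu>) :: complex))"
    by (simp add: field_simps)
  moreover have "sph_ext (h1 k) None = Some (of_nat k / (of_nat k - 1))"
    using sph_ext_h2_None[of k 1] k_ge_2 d_1_ge_2 d_n_ge_2 unfolding h1_eq_h2 by simp
  ultimately show ?thesis by simp
qed

lemma conj_iterate_close_to_h1_at_infinity:
  assumes e: "e > 0"
  shows "\<forall>\<^sub>F s in at_right 0.
    cdist (psi (z0 s) (sph_ext (R s) (sph_ext (R s) (psi (z0 s) None)))) (sph_ext (h1 k) None) < e"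
proof (rule eventually_cdist_less[OF _ _ e])
  have X: "\<forall>\<^sub>F s in at_right 0.
      recip_coord (psi (z0 s) (sph_ext (R s) (sph_ext (R s) (psi (z0 s) None))))
        = of_real (T s / scale s) / of_real (z0 s / scale s)
      \<and> psi (z0 s) (sph_ext (R s) (sph_ext (R s) (psi (z0 s) None))) \<noteq> Some 0"
    using eventually_pos
  proof eventually_elim
    case (elim s)
    then have "sph_ext (R s) (sph_ext (R s) (psi (z0 s) None)) = Some (of_real (T s))"
      by (simp add: psi_None sph_ext_Some_no_limit[OF Rfun_no_limit_at_0]
          sph_ext_None_tendsto[OF Rfun_tendsto_at_infinity])
    moreover have "scale s \<noteq> 0" using scale_pos elim by fastforce
    ultimately show ?case using elim by (simp add: psi_Some)
  qed
  have "((\<lambda>s. of_real (T s / scale s) / of_real (z0 s / scale s))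
      \<longlongrightarrow> of_real ((real k - 1) * \<mu>) / (of_real (real k * \<mu>) :: complex)) (at_right 0)"
    using of_real_k_mu_nonzero
    by (intro tendsto_divide tendsto_scaled[OF filterlim_ident])
  then show "((\<lambda>s. recip_coord (psi (z0 s) (sph_ext (R s) (sph_ext (R s) (psi (z0 s) None))))
      - recip_coord (sph_ext (h1 k) None)) \<longlongrightarrow> 0) (at_right 0)"
    unfolding sph_ext_h1_None recip_coord.simps inverse_inverse_eq
    by (rule Lim_transform_eventually[OF LIM_zero]) (use X in \<open>auto elim: eventually_mono\<close>)
  have "of_real ((real k - 1) * \<mu>) \<noteq> (0::complex)"
    using k_mu_pos(2) by (metis of_real_eq_0_iff less_irrefl)
  then have h1_nz: "sph_ext (h1 k) None \<noteq> Some 0"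
    unfolding sph_ext_h1_None using of_real_k_mu_nonzero by simp
  show "\<forall>\<^sub>F s in at_right 0. psi (z0 s) (sph_ext (R s) (sph_ext (R s) (psi (z0 s) None))) \<noteq> Some 0
      \<and> sph_ext (h1 k) None \<noteq> Some 0"
    using X by eventually_elim (use h1_nz in simp)
qed

text \<open>Since \<open>z\<^sub>0 \<approx> k\<mu> s\<^sup>\<nu>\<close>, the point \<open>\<psi>(z)\<close> lies on the inner scale and is sent near \<open>z\<^bsup>d\<^sub>n\<^esup>\<close>.\<close>
lemma conj_first_step:
  fixes s :: "'p \<Rightarrow> real" and z :: "'p \<Rightarrow> complex"
  assumes s: "filterlim s (at_right 0) F" and r: "r > 0" and z: "\<forall>\<^sub>F p in F. r \<le> norm (z p)"
  defines "y p \<equiv> R (s p) (of_real (z0 (s p)) / z p)"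
  shows "\<forall>\<^sub>F p in F. sph_ext (R (s p)) (psi (z0 (s p)) (Some (z p))) = Some (y p) \<and> y p \<noteq> 0"
    and "((\<lambda>p. inverse (y p) - inverse (z p) ^ d n) \<longlongrightarrow> 0) F"
proof -
  define c where "c = (of_real (real k * \<mu>) :: complex)"
  define Z where "Z p = (of_real (z0 (s p) / scale (s p)) :: complex)" for p
  have Z: "(Z \<longlongrightarrow> c) F" unfolding Z_def c_def by (rule tendsto_scaled(3)[OF s])
  have iz: "Bfun (\<lambda>p. inverse (z p)) F" by (rule Bfun_inverse_of_norm_ge[OF r z])
  define u where "u p = Z p / z p" for p
  have u: "Bfun u F" unfolding u_def divide_inverse by (rule Bfun_mult[OF tendsto_imp_Bfun[OF Z] iz])
  note inner = inner_expansion[OF s u]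
  have w: "\<forall>\<^sub>F p in F. psi (z0 (s p)) (Some (z p)) = Some (of_real (scale (s p)) * u p)
      \<and> of_real (scale (s p)) * u p = of_real (z0 (s p)) / z p \<and> u p \<noteq> 0"
    using eventually_compose_filterlim[OF eventually_pos s] z
  proof eventually_elim
    case (elim p)
    then have "z p \<noteq> 0" "scale (s p) \<noteq> 0" using r scale_pos by fastforce+
    then show ?case using elim by (simp add: psi_Some u_def Z_def)
  qed
  show "\<forall>\<^sub>F p in F. sph_ext (R (s p)) (psi (z0 (s p)) (Some (z p))) = Some (y p) \<and> y p \<noteq> 0"
    using w inner(1) by eventually_elim (auto simp: y_def)
  have c: "c \<noteq> 0" unfolding c_def by (rule of_real_k_mu_nonzero)
  have "((\<lambda>p. (Z p / c) ^ d n - 1) \<longlongrightarrow> (c / c) ^ d n - 1) F"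
    using c by (intro tendsto_intros Z)
  then have "((\<lambda>p. ((Z p / c) ^ d n - 1) * inverse (z p) ^ d n) \<longlongrightarrow> 0) F"
    using c by (intro tendsto_mult_Bfun_zero Bfun_power iz) simp
  then have "((\<lambda>p. (u p / c) ^ d n - inverse (z p) ^ d n) \<longlongrightarrow> 0) F"
    by (simp add: u_def divide_inverse power_mult_distrib algebra_simps)
  with inner(2) have "((\<lambda>p. recip_coord (sph_ext (R (s p)) (Some (of_real (scale (s p)) * u p)))
      - inverse (z p) ^ d n) \<longlongrightarrow> 0) F"
    unfolding c_def by (rule tendsto_diff_zero_trans)
  then show "((\<lambda>p. inverse (y p) - inverse (z p) ^ d n) \<longlongrightarrow> 0) F"
    by (rule Lim_transform_eventually) (use w inner(1) in \<open>auto simp: y_def elim: eventually_elim2\<close>)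
qed

lemma conj_second_step:
  fixes s :: "'p \<Rightarrow> real" and z :: "'p \<Rightarrow> complex"
  assumes s: "filterlim s (at_right 0) F" and r: "r > 0" and z: "\<forall>\<^sub>F p in F. r \<le> norm (z p)"
  defines "y p \<equiv> R (s p) (of_real (z0 (s p)) / z p)"
  shows "\<forall>\<^sub>F p in F. sph_ext (R (s p)) (sph_ext (R (s p)) (psi (z0 (s p)) (Some (z p)))) = Some (R (s p) (y p))"
    and "((\<lambda>p. R (s p) (y p) / of_real (scale (s p)) - outer_profile \<mu> k k (z p)) \<longlongrightarrow> 0) F"
proof -
  note first = conj_first_step[OF s r z, folded y_def]
  have iz: "Bfun (\<lambda>p. inverse (z p) ^ d n) F"
    by (rule Bfun_power[OF Bfun_inverse_of_norm_ge[OF r z]])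
  have iy: "Bfun (\<lambda>p. inverse (y p)) F"
    by (rule Bfun_of_tendsto_diff_zero[OF first(2) iz])
  obtain ry where ry: "ry > 0" "\<forall>\<^sub>F p in F. ry \<le> norm (y p)"
    using iy first(1) by (elim eventually_norm_ge_of_Bfun_inverse) (auto elim: eventually_mono)
  note outer = outer_expansion[OF s ry]
  show "\<forall>\<^sub>F p in F. sph_ext (R (s p)) (sph_ext (R (s p)) (psi (z0 (s p)) (Some (z p)))) = Some (R (s p) (y p))"
    using first(1) outer(1) by eventually_elim simp
  have "((\<lambda>p. inverse (y p) ^ d 1 - (inverse (z p) ^ d n) ^ d 1) \<longlongrightarrow> 0) F"
    by (rule tendsto_power_diff_zero[OF first(2) iy iz])
  then have "((\<lambda>p. of_real \<mu> * (inverse (y p) ^ d 1 - (inverse (z p) ^ d n) ^ d 1)) \<longlongrightarrow> 0) F"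
    by (rule tendsto_mult_right_zero)
  then have "((\<lambda>p. outer_profile \<mu> (d 1) k (y p) - outer_profile \<mu> k k (z p)) \<longlongrightarrow> 0) F"
    by (simp add: outer_profile_def right_diff_distrib mult.commute[of "d n"] flip: power_mult)
  with outer(2) show "((\<lambda>p. R (s p) (y p) / of_real (scale (s p)) - outer_profile \<mu> k k (z p)) \<longlongrightarrow> 0) F"
    by (rule tendsto_diff_zero_trans)
qed

lemma conj_iterate_close_to_h1_uniformly:
  assumes r: "r > 0" and e: "e > 0"
  shows "\<forall>\<^sub>F s in at_right 0. \<forall>z\<in>{z. r \<le> norm z}.
    cdist (psi (z0 s) (sph_ext (R s) (sph_ext (R s) (psi (z0 s) (Some z))))) (sph_ext (h1 k) (Some z)) < e"
proof (rule eventually_cdist_less_uniformly[OF _ _ e])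
  let ?G = "at_right 0 \<times>\<^sub>F principal {z. r \<le> norm z}"
  have s: "filterlim fst (at_right 0) ?G" by (rule filterlim_fst)
  have z: "\<forall>\<^sub>F p in ?G. r \<le> norm (snd p)" by (simp add: eventually_prod_principal_iff)
  define y where "y p = R (fst p) (of_real (z0 (fst p)) / snd p)" for p
  define Z where "Z p = (of_real (z0 (fst p) / scale (fst p)) :: complex)" for p :: "real \<times> complex"
  define V where "V p = outer_profile \<mu> k k (snd p)" for p :: "real \<times> complex"
  define c where "c = (of_real (real k * \<mu>) :: complex)"
  note second = conj_second_step[OF s r z, folded y_def V_def]
  have lim: "((\<lambda>p. R (fst p) (y p) / of_real (scale (fst p)) / Z p - V p / c) \<longlongrightarrow> 0) ?G"
    unfolding Z_def c_def using Bfun_outer_profile[OF r z] of_real_k_mu_nonzero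
    by (intro tendsto_diff_divide_zero[OF second(2)] tendsto_scaled(3)[OF s]) (simp_all add: V_def)
  have ev: "\<forall>\<^sub>F p in ?G.
      recip_coord (psi (z0 (fst p)) (sph_ext (R (fst p)) (sph_ext (R (fst p)) (psi (z0 (fst p)) (Some (snd p))))))
        = R (fst p) (y p) / of_real (scale (fst p)) / Z p
      \<and> recip_coord (sph_ext (h1 k) (Some (snd p))) = V p / c
      \<and> psi (z0 (fst p)) (sph_ext (R (fst p)) (sph_ext (R (fst p)) (psi (z0 (fst p)) (Some (snd p))))) \<noteq> Some 0
      \<and> sph_ext (h1 k) (Some (snd p)) \<noteq> Some 0"
    using second(1) z eventually_compose_filterlim[OF eventually_pos s]
  proof eventually_elim
    case (elim p)
    then have "snd p \<noteq> 0" "scale (fst p) \<noteq> 0" using r scale_pos by fastforce+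
    moreover note recip_coord_h2_Some[of k 1 \<mu> "snd p"]
    ultimately show ?case
      using elim k_ge_2 d_1_ge_2 d_n_ge_2 mu_pos
      by (simp add: psi_Some Z_def V_def c_def h1_eq_h2)
  qed
  show "((\<lambda>p. recip_coord (psi (z0 (fst p)) (sph_ext (R (fst p))
        (sph_ext (R (fst p)) (psi (z0 (fst p)) (Some (snd p))))))
      - recip_coord (sph_ext (h1 k) (Some (snd p)))) \<longlongrightarrow> 0) ?G"
    using lim by (rule Lim_transform_eventually) (rule eventually_mono[OF ev], simp)
  show "\<forall>\<^sub>F p in ?G. psi (z0 (fst p)) (sph_ext (R (fst p))
        (sph_ext (R (fst p)) (psi (z0 (fst p)) (Some (snd p))))) \<noteq> Some 0
      \<and> sph_ext (h1 k) (Some (snd p)) \<noteq> Some 0"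
    using ev by (rule eventually_mono) simp
qed

end

theorem lemma4p2:
  fixes d :: "nat \<Rightarrow> nat" and n :: nat
    and S T z0 :: "real \<Rightarrow> real"
  assumes n3: "n \<ge> 3" and nodd: "odd n"
    and dpos: "\<forall>i\<in>{1..n}. d i > 0"
    and dsum: "(\<Sum>i\<in>{1..n}. 1 / real (d i)) < 1"
    and eqs: "\<forall>\<^sub>F s in at_right 0.
        Rfun d n (S s) (T s) s 1 = complex_of_real (z0 s)
      \<and> Rfun d n (S s) (T s) s (complex_of_real (z0 s)) = 1
      \<and> (\<exists>a b. (Rfun d n (S s) (T s) s has_field_derivative a) (at 1)
             \<and> (Rfun d n (S s) (T s) s has_field_derivative b) (at (complex_of_real (z0 s)))
             \<and> a * b = 1)"
    and limS: "((\<lambda>s. S s / s powr nu d n) \<longlongrightarrow> mu d n) (at_right 0)"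
    and limT: "((\<lambda>s. T s / s powr nu d n) \<longlongrightarrow> (real (d 1 * d n) - 1) * mu d n) (at_right 0)"
    and limz: "((\<lambda>s. z0 s / s powr nu d n) \<longlongrightarrow> real (d 1 * d n) * mu d n) (at_right 0)"
  shows
    "(\<forall>r>0. \<forall>\<epsilon>>0. \<forall>\<^sub>F s in at_right 0. \<forall>w.
        (w = None \<or> (\<exists>z. w = Some z \<and> norm z \<ge> r)) \<longrightarrow>
        cdist (sph_ext (Rfun d n (S s) (T s) s) (sph_ext (Rfun d n (S s) (T s) s) w))
              (sph_ext (h2 (d 1) (d n)) w) < \<epsilon>)
   \<and> (\<forall>r>0. \<forall>\<epsilon>>0. \<forall>\<^sub>F s in at_right 0. \<forall>w.
        (w = None \<or> (\<exists>z. w = Some z \<and> norm z \<ge> r)) \<longrightarrow>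
        cdist ((psi (z0 s) \<circ> sph_ext (Rfun d n (S s) (T s) s) \<circ> psi (z0 s))
                 ((psi (z0 s) \<circ> sph_ext (Rfun d n (S s) (T s) s) \<circ> psi (z0 s)) w))
              (sph_ext (h1 (d 1 * d n)) w) < \<epsilon>)"
proof -
  interpret rn_family d n S T z0
    using eqs by unfold_locales (use assms in \<open>auto elim: eventually_mono\<close>)
  have "\<forall>\<^sub>F s in at_right 0. \<forall>w. (w = None \<or> (\<exists>z. w = Some z \<and> norm z \<ge> r)) \<longrightarrow>
      cdist (sph_ext (R s) (sph_ext (R s) w)) (sph_ext (h2 (d 1) (d n)) w) < \<epsilon>"
    if "r > 0" "\<epsilon> > 0" for r \<epsilon>
    using iterate_close_to_h2_uniformly[OF that] iterate_close_to_h2_at_infinity[OF that(2)] by eventually_elim auto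
  moreover have "\<forall>\<^sub>F s in at_right 0. \<forall>w. (w = None \<or> (\<exists>z. w = Some z \<and> norm z \<ge> r)) \<longrightarrow>
      cdist ((psi (z0 s) \<circ> sph_ext (R s) \<circ> psi (z0 s)) ((psi (z0 s) \<circ> sph_ext (R s) \<circ> psi (z0 s)) w))
        (sph_ext (h1 k) w) < \<epsilon>"
    if "r > 0" "\<epsilon> > 0" for r \<epsilon>
    using conj_iterate_close_to_h1_uniformly[OF that] conj_iterate_close_to_h1_at_infinity[OF that(2)] eventually_pos
    by eventually_elim (auto simp: psi_psi)
  ultimately show ?thesis by blast
qed

end
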